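(* Fix $x_0\in\mathbb{R}^d$ and assume (K) and (G). Then for every $x\in\mathbb{R}^d$, every $\delta>0$ and every $T>0$ there exists a control $\eta_{x,\delta,T}\in C^1_0([0,T];\mathbb{R}^n)$ such that $S^F_T(x,\eta_{x,\delta,T})\in B(x_0,\tfrac12\delta)$.
   Context: Let $d,n$ be positive integers with $n\le d$, $A:\mathbb{R}^d\to\mathbb{R}^d$, $B:\mathbb{R}^n\to\mathbb{R}^d$ linear, $F:\mathbb{R}^d\to\mathbb{R}^d$ smooth and globally Lipschitz. $C^k_0([0,T];\mathbb{R}^n)$ is the space of $k$ times continuously differentiable $\eta:[0,T]\to\mathbb{R}^n$ with $\eta(0)=0$ ($C_0$ for $k=0$). For $\eta\in C_0([0,T];\mathbb{R}^n)$ and $0\le t\le T$, $S^F_t(x,\eta)$ is the value at time $t$ of the solution of $y(t)=x+\int_0^t (Ay(s)+F(y(s)))\,\mathrm{d}s + B\eta(t)$ (i.e. $\dot y = Ay+F(y)+B\dot\eta$, $y(0)=x$). $B(x_0,r)$ is the open Euclidean ball. Let $e_1,\dots,e_n$ be the standard basis of $\mathbb{R}^n$. (K) the columns of $B, AB, A^2B,\dots$ span $\mathbb{R}^d$; $d_*$ denotes the smallest positive integer such that $\operatorname{span}\{A^jBe_i: 0\le j\le d_*-1,\ 1\le i\le n\}=\mathbb{R}^d$. (G) there is $a\in[0,\frac{1}{2d_*})$ with $\sup_{x}|F(x)|/(1+|x|)^a<\infty$. *)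

theory Defs
  imports "HOL-Analysis.Analysis"
begin

text \<open>Infinitely (Frechet) differentiable maps: G k x vs is the k-th derivative of f at x
  applied to the directions vs (a list of length k).\<close>
definition smooth_map :: "(real^'d \<Rightarrow> real^'e) \<Rightarrow> bool" where
  "smooth_map f \<longleftrightarrow> (\<exists>G :: nat \<Rightarrow> real^'d \<Rightarrow> (real^'d) list \<Rightarrow> real^'e.
     (\<forall>x. G 0 x [] = f x) \<and>
     (\<forall>k x vs. length vs = k \<longrightarrow>
        ((\<lambda>y. G k y vs) has_derivative (\<lambda>v. G (Suc k) x (v # vs))) (at x)))"

definition globally_lipschitz :: "(real^'d \<Rightarrow> real^'e) \<Rightarrow> bool" where
  "globally_lipschitz f \<longleftrightarrow> (\<exists>L. L-lipschitz_on UNIV f)"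

definition kalman_span :: "(real^'d \<Rightarrow> real^'d) \<Rightarrow> (real^'n \<Rightarrow> real^'d) \<Rightarrow> nat \<Rightarrow> (real^'d) set" where
  "kalman_span A B m = span {(A ^^ j) (B (axis i 1)) | j i. j < m}"

definition kalman_condition :: "(real^'d \<Rightarrow> real^'d) \<Rightarrow> (real^'n \<Rightarrow> real^'d) \<Rightarrow> bool" where
  "kalman_condition A B \<longleftrightarrow> span {(A ^^ j) (B (axis i 1)) | j i. True} = UNIV"

definition dstar :: "(real^'d \<Rightarrow> real^'d) \<Rightarrow> (real^'n \<Rightarrow> real^'d) \<Rightarrow> nat" where
  "dstar A B = (LEAST m. 0 < m \<and> kalman_span A B m = UNIV)"

definition growth_condition :: "(real^'d \<Rightarrow> real^'d) \<Rightarrow> (real^'n \<Rightarrow> real^'d) \<Rightarrow> (real^'d \<Rightarrow> real^'d) \<Rightarrow> bool" where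
  "growth_condition A B F \<longleftrightarrow> (\<exists>a::real. 0 \<le> a \<and> a < 1 / (2 * real (dstar A B)) \<and>
     (\<exists>C. \<forall>x. norm (F x) / (1 + norm x) powr a \<le> C))"

definition C1_0 :: "real \<Rightarrow> (real \<Rightarrow> real^'n) \<Rightarrow> bool" where
  "C1_0 T \<eta> \<longleftrightarrow> \<eta> 0 = 0 \<and>
     (\<exists>D. (\<forall>t\<in>{0..T}. (\<eta> has_vector_derivative D t) (at t within {0..T})) \<and> continuous_on {0..T} D)"

definition is_solution ::
  "(real^'d \<Rightarrow> real^'d) \<Rightarrow> (real^'n \<Rightarrow> real^'d) \<Rightarrow> (real^'d \<Rightarrow> real^'d) \<Rightarrow> real \<Rightarrow> real^'d
    \<Rightarrow> (real \<Rightarrow> real^'n) \<Rightarrow> (real \<Rightarrow> real^'d) \<Rightarrow> bool" where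
  "is_solution A B F T x \<eta> y \<longleftrightarrow> continuous_on {0..T} y \<and>
     (\<forall>t\<in>{0..T}. y t = x + integral {0..t} (\<lambda>s. A (y s) + F (y s)) + B (\<eta> t))"

end

theory Submission
  imports Defs
begin

text \<open>Under the Kalman condition the linear system y' = A y + B \<eta>' is exactly controllable on [0, T]
  with C^1 controls: a vector p normal to the reachable subspace would annihilate every trajectory,
  and differentiating along suitable controls gives p \<bullet> A^j B w = 0 for all j and w.
  Choosing controls \<eta>_u that steer 0 to u and depend linearly on u, the endpoint \<Psi> u of the
  nonlinear system driven by \<eta>_u differs from u by O(sqrt (1 + |u|)), because F grows at most like
  |y|^(1/2). Brouwer's fixed point theorem for u \<mapsto> u + x0 - \<Psi> u on a large ball gives \<Psi> u = x0,
  so the target is even hit exactly.\<close>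

section \<open>Integral equations\<close>

definition integral_solution ::
  "('a::euclidean_space \<Rightarrow> 'a) \<Rightarrow> 'a \<Rightarrow> (real \<Rightarrow> 'a) \<Rightarrow> real \<Rightarrow> (real \<Rightarrow> 'a) \<Rightarrow> bool" where
  "integral_solution G x h T y \<longleftrightarrow> continuous_on {0..T} y \<and>
     (\<forall>t\<in>{0..T}. y t = x + integral {0..t} (\<lambda>s. G (y s)) + h t)"

lemma integral_solution_at_0:
  "integral_solution G x h T y \<Longrightarrow> T \<ge> 0 \<Longrightarrow> y 0 = x + h 0"
  unfolding integral_solution_def by auto

lemma integrable_on_initial_segment:
  fixes f :: "real \<Rightarrow> 'b::euclidean_space"
  assumes "continuous_on {0..T} f" "t \<in> {0..T}"
  shows "f integrable_on {0..t}"
  by (rule integrable_continuous_real, rule continuous_on_subset[OF assms(1)]) (use assms(2) in auto)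

lemma norm_integral_initial_segment_le:
  fixes f :: "real \<Rightarrow> 'b::euclidean_space"
  assumes "continuous_on {0..T} f" "continuous_on {0..T} g" "t \<in> {0..T}"
    "\<And>s. s \<in> {0..T} \<Longrightarrow> norm (f s) \<le> g s"
  shows "norm (integral {0..t} f) \<le> integral {0..t} g"
  by (rule integral_norm_bound_integral[OF integrable_on_initial_segment[OF assms(1,3)]
        integrable_on_initial_segment[OF assms(2,3)]]) (use assms in auto)

lemma integral_initial_segment_nonneg:
  fixes u :: "real \<Rightarrow> real"
  assumes "continuous_on {0..T} u" "t \<in> {0..T}" "\<And>s. s \<in> {0..T} \<Longrightarrow> 0 \<le> u s"
  shows "0 \<le> integral {0..t} u"
  by (rule integral_nonneg[OF integrable_on_initial_segment[OF assms(1,2)]]) (use assms in auto)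

lemma has_integral_exp_scaled:
  fixes c t :: real
  assumes "c > 0" "t \<ge> 0"
  shows "((\<lambda>s. exp (c * s)) has_integral ((exp (c * t) - 1) / c)) {0..t}"
proof -
  have "((\<lambda>s. exp (c * s)) has_integral (exp (c * t) / c - exp (c * 0) / c)) {0..t}"
  proof (rule fundamental_theorem_of_calculus[OF assms(2)])
    fix s assume "s \<in> {0..t}"
    have "((\<lambda>s. exp (c * s) / c) has_real_derivative (exp (c * s) * c) / c) (at s within {0..t})"
      by (auto intro!: derivative_eq_intros)
    then show "((\<lambda>s. exp (c * s) / c) has_vector_derivative exp (c * s)) (at s within {0..t})"
      using assms by (simp add: has_real_derivative_iff_has_vector_derivative)
  qed
  then show ?thesis by (simp add: diff_divide_distrib)
qed

text \<open>At the maximiser of u s * exp (-2 L s) the integral inequality forces the maximum below \<alpha>.\<close>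
lemma gronwall_exp_bound:
  fixes u :: "real \<Rightarrow> real"
  assumes cont: "continuous_on {0..T} u" and L: "L > 0" and \<alpha>: "\<alpha> \<ge> 0"
    and le: "\<And>t. t \<in> {0..T} \<Longrightarrow> u t \<le> \<alpha> + L * integral {0..t} u"
    and t: "t \<in> {0..T}"
  shows "u t \<le> \<alpha> * exp (2 * L * T)"
proof -
  define v where "v s = u s * exp (-(2 * L * s))" for s
  have cv: "continuous_on {0..T} v" unfolding v_def by (intro continuous_intros cont)
  obtain t1 where t1: "t1 \<in> {0..T}" and max: "\<And>s. s \<in> {0..T} \<Longrightarrow> v s \<le> v t1"
    using continuous_attains_sup[OF compact_Icc _ cv] t by fastforce
  define M where "M = v t1"
  have u_eq: "u s = v s * exp (2 * L * s)" for s by (simp add: v_def mult.assoc flip: exp_add)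
  have u_le: "u s \<le> M * exp (2 * L * s)" if "s \<in> {0..T}" for s
    using max[OF that] by (simp add: u_eq M_def)
  have u_le_integral: "u s \<le> \<alpha> + M * (exp (2 * L * s) - 1) / 2" if s: "s \<in> {0..T}" for s
  proof -
    have hi: "((\<lambda>r. M * exp (2 * L * r)) has_integral M * ((exp (2 * L * s) - 1) / (2 * L))) {0..s}"
      using has_integral_exp_scaled[of "2 * L" s] L s by (intro has_integral_mult_right) auto
    have "integral {0..s} u \<le> M * ((exp (2 * L * s) - 1) / (2 * L))"
      using integral_le[OF integrable_on_initial_segment[OF cont s] has_integral_integrable[OF hi]]
        u_le s integral_unique[OF hi] by auto
    then have "L * integral {0..s} u \<le> L * (M * ((exp (2 * L * s) - 1) / (2 * L)))"
      using L by (intro mult_left_mono) auto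
    also have "\<dots> = M * (exp (2 * L * s) - 1) / 2" using L by (simp add: field_simps)
    finally have "L * integral {0..s} u \<le> M * (exp (2 * L * s) - 1) / 2" .
    then show ?thesis using le[OF s] by linarith
  qed
  have "M \<le> \<alpha>"
  proof (rule ccontr)
    assume "\<not> M \<le> \<alpha>"
    then have "M > \<alpha>" "M > 0" using \<alpha> by auto
    moreover have "exp (2 * L * t1) \<ge> 1" using t1 L by auto
    moreover have "M * exp (2 * L * t1) \<le> \<alpha> + M * (exp (2 * L * t1) - 1) / 2"
      using u_le_integral[OF t1] u_eq[of t1] by (simp add: M_def)
    ultimately have "M * exp (2 * L * t1) + M \<le> 2 * \<alpha>" "M * exp (2 * L * t1) \<ge> M"
      by (auto simp: field_simps)
    then show False using \<open>M > \<alpha>\<close> by linarith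
  qed
  moreover have "exp (2 * L * t) \<le> exp (2 * L * T)" using t L by auto
  ultimately have "M * exp (2 * L * t) \<le> \<alpha> * exp (2 * L * T)"
    using \<alpha> by (cases "M \<ge> 0") (auto intro: mult_mono order_trans[OF mult_nonpos_nonneg])
  then show ?thesis using u_le[OF t] by linarith
qed

lemma integral_solution_diff_bound:
  fixes G :: "'a::euclidean_space \<Rightarrow> 'a"
  assumes G: "L-lipschitz_on UNIV G"
    and y1: "integral_solution G x1 h1 T y1" and y2: "integral_solution G x2 h2 T y2"
    and K: "\<And>t. t \<in> {0..T} \<Longrightarrow> norm (x1 - x2 + (h1 t - h2 t)) \<le> K" and "K \<ge> 0"
    and t: "t \<in> {0..T}"
  shows "norm (y1 t - y2 t) \<le> K * exp (2 * (L + 1) * T)"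
proof -
  have L: "L \<ge> 0" using lipschitz_on_nonneg[OF G] .
  have cG: "continuous_on UNIV G" using lipschitz_on_continuous_on[OF G] .
  have c1: "continuous_on {0..T} y1" and c2: "continuous_on {0..T} y2"
    using y1 y2 by (auto simp: integral_solution_def)
  have cG1: "continuous_on {0..T} (\<lambda>r. G (y1 r))" and cG2: "continuous_on {0..T} (\<lambda>r. G (y2 r))"
    by (auto intro: continuous_on_compose2[OF cG _ subset_UNIV] c1 c2)
  define u where "u s = norm (y1 s - y2 s)" for s
  have cu: "continuous_on {0..T} u" unfolding u_def by (intro continuous_intros c1 c2)
  have "u t \<le> K * exp (2 * (L + 1) * T)"
  proof (rule gronwall_exp_bound[OF cu _ \<open>K \<ge> 0\<close> _ t])
    fix s assume s: "s \<in> {0..T}"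
    have "y1 s - y2 s = (x1 - x2 + (h1 s - h2 s)) + integral {0..s} (\<lambda>r. G (y1 r) - G (y2 r))"
      using y1 y2 s integral_diff[OF integrable_on_initial_segment[OF cG1 s]
          integrable_on_initial_segment[OF cG2 s]]
      by (auto simp: integral_solution_def algebra_simps)
    moreover have "norm (integral {0..s} (\<lambda>r. G (y1 r) - G (y2 r))) \<le> integral {0..s} (\<lambda>r. L * u r)"
      using lipschitz_onD[OF G] by (intro norm_integral_initial_segment_le[OF _ _ s])
        (auto intro!: continuous_intros cG1 cG2 cu c1 c2 simp: u_def dist_norm)
    moreover have "0 \<le> integral {0..s} u"
      by (rule integral_initial_segment_nonneg[OF cu s]) (simp add: u_def)
    then have "integral {0..s} (\<lambda>r. L * u r) \<le> (L + 1) * integral {0..s} u"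
      by (simp add: distrib_right)
    ultimately show "u s \<le> K + (L + 1) * integral {0..s} u"
      using K[OF s] norm_triangle_ineq[of "x1 - x2 + (h1 s - h2 s)"
          "integral {0..s} (\<lambda>r. G (y1 r) - G (y2 r))"]
      unfolding u_def by (smt (verit))
  qed (use L in auto)
  then show ?thesis by (simp add: u_def)
qed

lemma integral_solution_unique:
  fixes G :: "'a::euclidean_space \<Rightarrow> 'a"
  assumes "L-lipschitz_on UNIV G" "integral_solution G x h T y1" "integral_solution G x h T y2"
    and "t \<in> {0..T}"
  shows "y1 t = y2 t"
  using integral_solution_diff_bound[OF assms(1-3), of 0 t] assms(4) by simp

lemma integral_solution_norm_bound:
  fixes G :: "'a::euclidean_space \<Rightarrow> 'a"
  assumes G: "L-lipschitz_on UNIV G" and y: "integral_solution G x h T y"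
    and K: "\<And>t. t \<in> {0..T} \<Longrightarrow> norm x + norm (h t) + T * norm (G 0) \<le> K"
    and t: "t \<in> {0..T}"
  shows "norm (y t) \<le> K * exp (2 * (L + 1) * T)"
proof -
  have L: "L \<ge> 0" using lipschitz_on_nonneg[OF G] .
  have "K \<ge> 0" using K[OF t] t by (smt (verit) norm_ge_zero mult_nonneg_nonneg atLeastAtMost_iff)
  have c: "continuous_on {0..T} y" using y by (simp add: integral_solution_def)
  have cG: "continuous_on {0..T} (\<lambda>r. G (y r))"
    by (rule continuous_on_compose2[OF lipschitz_on_continuous_on[OF G] c subset_UNIV])
  define u where "u s = norm (y s)" for s
  have cu: "continuous_on {0..T} u" unfolding u_def by (intro continuous_intros c)
  have "u t \<le> K * exp (2 * (L + 1) * T)"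
  proof (rule gronwall_exp_bound[OF cu _ \<open>K \<ge> 0\<close> _ t])
    fix s assume s: "s \<in> {0..T}"
    have ys: "y s = x + integral {0..s} (\<lambda>r. G (y r)) + h s"
      using y s unfolding integral_solution_def by blast
    have "norm (G (y r)) \<le> norm (G 0) + L * u r" for r
      using lipschitz_onD[OF G, of "y r" 0] norm_triangle_ineq2[of "G (y r)" "G 0"]
      by (simp add: u_def dist_norm)
    then have "norm (integral {0..s} (\<lambda>r. G (y r))) \<le> integral {0..s} (\<lambda>r. norm (G 0) + L * u r)"
      by (intro norm_integral_initial_segment_le[OF cG _ s]) (auto intro!: continuous_intros cu)
    also have "\<dots> = s * norm (G 0) + L * integral {0..s} u"
      using integral_add[OF integrable_on_initial_segment[OF continuous_on_const s]
          integrable_on_initial_segment[OF continuous_on_mult_left[OF cu] s]] s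
      by simp
    also have "\<dots> \<le> T * norm (G 0) + (L + 1) * integral {0..s} u"
      using integral_initial_segment_nonneg[OF cu s] s
      by (intro add_mono mult_right_mono) (auto simp: u_def)
    finally have "norm (integral {0..s} (\<lambda>r. G (y r))) \<le> T * norm (G 0) + (L + 1) * integral {0..s} u" .
    moreover have "norm (y s) \<le> norm x + norm (integral {0..s} (\<lambda>r. G (y r))) + norm (h s)"
      using norm_triangle_ineq[of "x + integral {0..s} (\<lambda>r. G (y r))" "h s"]
        norm_triangle_ineq[of x "integral {0..s} (\<lambda>r. G (y r))"] unfolding ys by linarith
    ultimately show "u s \<le> K + (L + 1) * integral {0..s} u"
      using K[OF s] unfolding u_def by linarith
  qed (use L in auto)
  then show ?thesis by (simp add: u_def)
qed

text \<open>With c = 2 (L + 1) the Picard map is a 1/2-contraction for the sup norm weighted by exp (-c t).\<close>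
lemma weighted_integral_lipschitz_bound:
  fixes G :: "'a::euclidean_space \<Rightarrow> 'a"
  assumes G: "L-lipschitz_on UNIV G" and c: "c = 2 * (L + 1)" and s: "s \<ge> 0"
    and v: "continuous_on {0..s} v" and w: "continuous_on {0..s} w"
    and D: "\<And>r. r \<in> {0..s} \<Longrightarrow> norm (v r - w r) \<le> D"
  shows "exp (-(c * s)) * norm (integral {0..s} (\<lambda>r. G (exp (c * r) *\<^sub>R v r))
           - integral {0..s} (\<lambda>r. G (exp (c * r) *\<^sub>R w r))) \<le> D / 2"
proof -
  have L: "L \<ge> 0" using lipschitz_on_nonneg[OF G] .
  have c0: "c > 0" using L c by simp
  have D0: "D \<ge> 0" using D[of 0] s by (smt (verit) atLeastAtMost_iff norm_ge_zero)
  have cG: "continuous_on UNIV G" using lipschitz_on_continuous_on[OF G] .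
  have iv: "(\<lambda>r. G (exp (c * r) *\<^sub>R v r)) integrable_on {0..s}"
    and iw: "(\<lambda>r. G (exp (c * r) *\<^sub>R w r)) integrable_on {0..s}"
    by (auto intro!: integrable_continuous_real continuous_on_compose2[OF cG _ subset_UNIV]
        continuous_intros v w)
  have hi: "((\<lambda>r. L * D * exp (c * r)) has_integral L * D * ((exp (c * s) - 1) / c)) {0..s}"
    using has_integral_exp_scaled[OF c0 s] by (rule has_integral_mult_right)
  have "norm (integral {0..s} (\<lambda>r. G (exp (c * r) *\<^sub>R v r) - G (exp (c * r) *\<^sub>R w r)))
      \<le> integral {0..s} (\<lambda>r. L * D * exp (c * r))"
  proof (rule integral_norm_bound_integral[OF integrable_diff[OF iv iw] has_integral_integrable[OF hi]])
    fix r assume r: "r \<in> {0..s}"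
    have "norm (G (exp (c * r) *\<^sub>R v r) - G (exp (c * r) *\<^sub>R w r))
        \<le> L * norm (exp (c * r) *\<^sub>R v r - exp (c * r) *\<^sub>R w r)"
      using lipschitz_onD[OF G] by (simp add: dist_norm)
    also have "\<dots> = L * (exp (c * r) * norm (v r - w r))"
      by (simp flip: scaleR_diff_right)
    also have "\<dots> \<le> L * (exp (c * r) * D)"
      using L D[OF r] by (intro mult_left_mono) auto
    finally show "norm (G (exp (c * r) *\<^sub>R v r) - G (exp (c * r) *\<^sub>R w r)) \<le> L * D * exp (c * r)"
      by (simp add: mult_ac)
  qed
  then have "norm (integral {0..s} (\<lambda>r. G (exp (c * r) *\<^sub>R v r))
      - integral {0..s} (\<lambda>r. G (exp (c * r) *\<^sub>R w r))) \<le> L * D * ((exp (c * s) - 1) / c)"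
    using integral_diff[OF iv iw] integral_unique[OF hi] by simp
  then have "exp (-(c * s)) * norm (integral {0..s} (\<lambda>r. G (exp (c * r) *\<^sub>R v r))
      - integral {0..s} (\<lambda>r. G (exp (c * r) *\<^sub>R w r))) \<le> L * D * ((1 - exp (-(c * s))) / c)"
    by (subst (asm) mult_le_cancel_left_pos[of "exp (-(c * s))", symmetric])
      (auto simp: field_simps exp_minus)
  also have "\<dots> \<le> L * D * (1 / c)"
    using L D0 c0 by (intro mult_left_mono divide_right_mono) auto
  also have "\<dots> \<le> D / 2"
    using L D0 c by (simp add: field_simps)
  finally show ?thesis .
qed

lemma integral_solution_exists:
  fixes G :: "'a::euclidean_space \<Rightarrow> 'a"
  assumes G: "L-lipschitz_on UNIV G" and h: "continuous_on {0..T} h" and T: "T \<ge> 0"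
  shows "\<exists>y. integral_solution G x h T y"
proof -
  define c where "c = 2 * (L + 1)"
  have cG: "continuous_on UNIV G" using lipschitz_on_continuous_on[OF G] .
  define f where "f v t = exp (-(c * t)) *\<^sub>R
      (x + integral {0..t} (\<lambda>s. G (exp (c * s) *\<^sub>R apply_bcontfun v s)) + h t)"
    for v :: "real \<Rightarrow>\<^sub>C 'a" and t
  have "continuous_on {0..T} (f v)" for v
    unfolding f_def
    by (intro continuous_intros h indefinite_integral_continuous_1 integrable_continuous_real
        continuous_on_compose2[OF cG _ subset_UNIV] continuous_on_apply_bcontfun)
  then have "\<exists>g::real \<Rightarrow>\<^sub>C 'a. \<forall>t. apply_bcontfun g t = f v (clamp 0 T t)" for v
    by (metis continuous_on_cbox_bcontfunE cbox_interval)
  then obtain \<Psi> where \<Psi>: "\<And>v t. apply_bcontfun (\<Psi> v) t = f v (clamp 0 T t)"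
    by metis
  have "dist (\<Psi> v) (\<Psi> w) \<le> 1/2 * dist v w" for v w
  proof (rule dist_bound)
    fix t
    define s where "s = clamp 0 T t"
    have s: "s \<in> {0..T}" using clamp_in_interval[of 0 T t] T by (auto simp: s_def)
    have "f v s - f w s = exp (-(c * s)) *\<^sub>R
        (integral {0..s} (\<lambda>r. G (exp (c * r) *\<^sub>R apply_bcontfun v r))
         - integral {0..s} (\<lambda>r. G (exp (c * r) *\<^sub>R apply_bcontfun w r)))"
      unfolding f_def by (simp add: algebra_simps)
    then have "dist (\<Psi> v t) (\<Psi> w t) = exp (-(c * s)) * norm
        (integral {0..s} (\<lambda>r. G (exp (c * r) *\<^sub>R apply_bcontfun v r))
         - integral {0..s} (\<lambda>r. G (exp (c * r) *\<^sub>R apply_bcontfun w r)))"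
      by (simp add: \<Psi> s_def dist_norm)
    also have "\<dots> \<le> dist v w / 2"
      using s by (intro weighted_integral_lipschitz_bound[OF G c_def])
        (auto intro: continuous_on_apply_bcontfun simp flip: dist_norm intro!: dist_bounded)
    finally show "dist (\<Psi> v t) (\<Psi> w t) \<le> 1/2 * dist v w" by simp
  qed
  then obtain v where v: "\<Psi> v = v"
    using banach_fix_type[of "1/2" \<Psi>] by auto
  define y where "y t = exp (c * t) *\<^sub>R apply_bcontfun v t" for t
  have "integral_solution G x h T y"
    unfolding integral_solution_def
  proof (intro conjI ballI)
    show "continuous_on {0..T} y"
      unfolding y_def by (intro continuous_intros continuous_on_apply_bcontfun)
    fix t assume t: "t \<in> {0..T}"
    have "apply_bcontfun v t = f v t"
      using \<Psi>[of v t] v clamp_cancel_cbox[of t 0 T] t by simp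
    then show "y t = x + integral {0..t} (\<lambda>s. G (y s)) + h t"
      by (simp add: y_def f_def flip: exp_add)
  qed
  then show ?thesis by blast
qed

section \<open>Admissible controls\<close>

text \<open>Controls live on the whole real line and vanish for s \<le> 0, so that they can be delayed;
  restricted to [0, T] they belong to C1_0.\<close>
definition admissible_control :: "(real \<Rightarrow> 'b::real_normed_vector) \<Rightarrow> bool" where
  "admissible_control \<eta> \<longleftrightarrow>
     (\<exists>D. (\<forall>s. (\<eta> has_vector_derivative D s) (at s)) \<and> continuous_on UNIV D) \<and> (\<forall>s\<le>0. \<eta> s = 0)"

lemma admissible_control_continuous_on: "admissible_control \<eta> \<Longrightarrow> continuous_on S \<eta>"
  unfolding admissible_control_def
  by (metis continuous_at_imp_continuous_on has_vector_derivative_continuous)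

lemma admissible_control_C1_0: "admissible_control \<eta> \<Longrightarrow> C1_0 T \<eta>"
  unfolding admissible_control_def C1_0_def
  by (auto intro: has_vector_derivative_at_within continuous_on_subset)

lemma admissible_control_zero: "admissible_control (\<lambda>s. 0)"
  unfolding admissible_control_def by (intro conjI exI[of _ "\<lambda>s. 0"]) auto

lemma admissible_control_add:
  assumes "admissible_control f" "admissible_control g"
  shows "admissible_control (\<lambda>s. f s + g s)"
proof -
  obtain Df Dg where "\<And>s. (f has_vector_derivative Df s) (at s)" "continuous_on UNIV Df"
    "\<And>s. (g has_vector_derivative Dg s) (at s)" "continuous_on UNIV Dg"
    using assms unfolding admissible_control_def by blast
  then show ?thesis
    using assms unfolding admissible_control_def
    by (intro conjI exI[of _ "\<lambda>s. Df s + Dg s"] allI has_vector_derivative_add continuous_on_add) auto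
qed

lemma admissible_control_scaleR:
  assumes "admissible_control f"
  shows "admissible_control (\<lambda>s. c *\<^sub>R f s)"
proof -
  obtain D where "\<And>s. (f has_vector_derivative D s) (at s)" "continuous_on UNIV D"
    using assms unfolding admissible_control_def by blast
  then show ?thesis
    using assms unfolding admissible_control_def
    by (intro conjI exI[of _ "\<lambda>s. c *\<^sub>R D s"] allI continuous_intros
        has_vector_derivative_scaleR[OF DERIV_const, simplified]) auto
qed

lemma admissible_control_sum:
  assumes "finite I" "\<And>i. i \<in> I \<Longrightarrow> admissible_control (\<eta> i)"
  shows "admissible_control (\<lambda>s. \<Sum>i\<in>I. c i *\<^sub>R \<eta> i s)"
  using assms
proof (induction I rule: finite_induct)
  case (insert i I)
  then show ?case
    using admissible_control_add[OF admissible_control_scaleR[of "\<eta> i" "c i"]] by simp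
qed (simp add: admissible_control_zero)

lemma admissible_control_delay:
  assumes "admissible_control \<eta>" "h \<ge> 0"
  shows "admissible_control (\<lambda>s. \<eta> (s - h))"
proof -
  obtain D where D: "\<And>s. (\<eta> has_vector_derivative D s) (at s)" "continuous_on UNIV D"
    using assms(1) unfolding admissible_control_def by blast
  have "((\<lambda>s. \<eta> (s - h)) has_vector_derivative D (s - h)) (at s)" for s
  proof -
    have shift: "((\<lambda>s. s - h) has_vector_derivative 1) (at s)" by (auto intro!: derivative_eq_intros)
    have "(\<eta> has_vector_derivative D (s - h)) (at (s - h) within range (\<lambda>s. s - h))"
      using D(1) by (rule has_vector_derivative_at_within)
    from vector_diff_chain_within[OF shift this] show ?thesis by (simp add: o_def)
  qed
  moreover have "continuous_on UNIV (\<lambda>s. D (s - h))"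
    by (rule continuous_on_compose2[OF D(2)]) (auto intro!: continuous_intros)
  ultimately show ?thesis
    using assms unfolding admissible_control_def by (intro conjI exI[of _ "\<lambda>s. D (s - h)"]) auto
qed

definition quadratic_ramp :: "real \<Rightarrow> real" where
  "quadratic_ramp s = (if s \<le> 0 then 0 else s\<^sup>2 / 2)"

lemma has_real_derivative_quadratic_ramp: "(quadratic_ramp has_real_derivative max s 0) (at s)"
proof -
  consider "s < 0" | "s > 0" | "s = 0" by linarith
  then show ?thesis
  proof cases
    case 1
    then have ev: "\<forall>\<^sub>F r in nhds s. 0 = quadratic_ramp r"
      using eventually_nhds_in_open[of "{..<0}" s] by (auto elim!: eventually_mono simp: quadratic_ramp_def)
    moreover have "((\<lambda>_. 0::real) has_real_derivative 0) (at s)" by simp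
    ultimately show ?thesis using DERIV_cong_ev[OF refl ev refl] 1 by simp
  next
    case 2
    then have ev: "\<forall>\<^sub>F r in nhds s. r\<^sup>2 / 2 = quadratic_ramp r"
      using eventually_nhds_in_open[of "{0<..}" s] by (auto elim!: eventually_mono simp: quadratic_ramp_def)
    moreover have "((\<lambda>r. r\<^sup>2 / 2) has_real_derivative s) (at s)"
      by (auto intro!: derivative_eq_intros)
    ultimately show ?thesis using DERIV_cong_ev[OF refl ev refl] 2 by simp
  next
    case 3
    have ev: "\<forall>\<^sub>F r in at 0. max r 0 / 2 = (quadratic_ramp (0 + r) - quadratic_ramp 0) / r"
      unfolding eventually_at_filter by (auto simp: quadratic_ramp_def power2_eq_square max_def)
    have "((\<lambda>r. max r 0 / 2) \<longlongrightarrow> max 0 0 / 2) (at (0::real))"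
      by (intro tendsto_intros) simp
    then have "((\<lambda>r. (quadratic_ramp (0 + r) - quadratic_ramp 0) / r) \<longlongrightarrow> 0) (at 0)"
      using tendsto_cong[OF ev] by simp
    then show ?thesis using 3 by (simp add: DERIV_def)
  qed
qed

lemma admissible_control_quadratic_ramp: "admissible_control (\<lambda>s. quadratic_ramp s *\<^sub>R w)"
proof -
  have "((\<lambda>s. quadratic_ramp s *\<^sub>R w) has_vector_derivative max s 0 *\<^sub>R w) (at s)" for s
    using has_vector_derivative_scaleR[OF has_real_derivative_quadratic_ramp has_vector_derivative_const]
    by simp
  then show ?thesis
    unfolding admissible_control_def
    by (intro conjI exI[of _ "\<lambda>s. max s 0 *\<^sub>R w"]) (auto intro!: continuous_intros simp: quadratic_ramp_def)
qed

section \<open>Controllability of the linear system\<close>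

lemma linear_integral_solution_zero:
  "linear A \<Longrightarrow> linear B \<Longrightarrow> integral_solution A 0 (\<lambda>t. B 0) T (\<lambda>s. 0)"
  unfolding integral_solution_def by (simp add: linear_0)

lemma linear_integral_solution_add:
  fixes A :: "'a::euclidean_space \<Rightarrow> 'a" and B :: "'b::euclidean_space \<Rightarrow> 'a"
  assumes A: "linear A" and B: "linear B"
    and z1: "integral_solution A 0 (\<lambda>t. B (\<eta>1 t)) T z1"
    and z2: "integral_solution A 0 (\<lambda>t. B (\<eta>2 t)) T z2"
  shows "integral_solution A 0 (\<lambda>t. B (\<eta>1 t + \<eta>2 t)) T (\<lambda>s. z1 s + z2 s)"
  unfolding integral_solution_def
proof (intro conjI ballI)
  have c1: "continuous_on {0..T} (\<lambda>s. A (z1 s))" and c2: "continuous_on {0..T} (\<lambda>s. A (z2 s))"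
    using z1 z2 linear_continuous_on_compose[OF _ A] by (auto simp: integral_solution_def)
  show "continuous_on {0..T} (\<lambda>s. z1 s + z2 s)"
    using z1 z2 by (auto simp: integral_solution_def intro!: continuous_intros)
  fix t assume t: "t \<in> {0..T}"
  have "integral {0..t} (\<lambda>s. A (z1 s + z2 s)) = integral {0..t} (\<lambda>s. A (z1 s)) + integral {0..t} (\<lambda>s. A (z2 s))"
    using integral_add[OF integrable_on_initial_segment[OF c1 t] integrable_on_initial_segment[OF c2 t]]
    by (simp add: linear_add[OF A])
  then show "z1 t + z2 t = 0 + integral {0..t} (\<lambda>s. A (z1 s + z2 s)) + B (\<eta>1 t + \<eta>2 t)"
    using z1 z2 t by (simp add: integral_solution_def linear_add[OF B])
qed

lemma linear_integral_solution_scaleR: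
  fixes A :: "'a::euclidean_space \<Rightarrow> 'a" and B :: "'b::euclidean_space \<Rightarrow> 'a"
  assumes A: "linear A" and B: "linear B" and z: "integral_solution A 0 (\<lambda>t. B (\<eta> t)) T z"
  shows "integral_solution A 0 (\<lambda>t. B (c *\<^sub>R \<eta> t)) T (\<lambda>s. c *\<^sub>R z s)"
  using z unfolding integral_solution_def
  by (auto intro!: continuous_intros simp: linear_scale[OF A] linear_scale[OF B] scaleR_add_right)

lemma linear_integral_solution_sum:
  fixes A :: "'a::euclidean_space \<Rightarrow> 'a" and B :: "'b::euclidean_space \<Rightarrow> 'a"
  assumes A: "linear A" and B: "linear B" and "finite I"
    and "\<And>i. i \<in> I \<Longrightarrow> integral_solution A 0 (\<lambda>t. B (\<eta> i t)) T (z i)"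
  shows "integral_solution A 0 (\<lambda>t. B (\<Sum>i\<in>I. c i *\<^sub>R \<eta> i t)) T (\<lambda>s. \<Sum>i\<in>I. c i *\<^sub>R z i s)"
  using assms(3,4)
proof (induction I rule: finite_induct)
  case empty
  then show ?case using linear_integral_solution_zero[OF A B] by simp
next
  case (insert i I)
  then show ?case
    using linear_integral_solution_add[OF A B linear_integral_solution_scaleR[OF A B]] by simp
qed

lemma linear_integral_solution_has_vector_derivative:
  fixes A :: "'a::euclidean_space \<Rightarrow> 'a" and B :: "'b::euclidean_space \<Rightarrow> 'a"
  assumes A: "linear A" and B: "linear B" and z: "integral_solution A 0 (\<lambda>t. B (\<eta> t)) T z"
    and D: "(\<eta> has_vector_derivative D) (at t)" and t: "t \<in> {0..T}"
  shows "(z has_vector_derivative (A (z t) + B D)) (at t within {0..T})"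
proof -
  have "continuous_on {0..T} z" using z by (simp add: integral_solution_def)
  then have cA: "continuous_on {0..T} (\<lambda>s. A (z s))" using A by (rule linear_continuous_on_compose)
  have d1: "((\<lambda>u. integral {0..u} (\<lambda>s. A (z s))) has_vector_derivative A (z t)) (at t within {0..T})"
    by (rule integral_has_vector_derivative[OF cA t])
  have d2: "((\<lambda>s. B (\<eta> s)) has_vector_derivative B D) (at t within {0..T})"
    using B has_vector_derivative_at_within[OF D]
    by (simp add: linear_conv_bounded_linear bounded_linear.has_vector_derivative)
  have "((\<lambda>u. 0 + integral {0..u} (\<lambda>s. A (z s)) + B (\<eta> u)) has_vector_derivative (A (z t) + B D))
      (at t within {0..T})"
    using has_vector_derivative_add[OF d1 d2] by simp
  then show ?thesis
    by (rule has_vector_derivative_transform[OF t, rotated])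
      (use z in \<open>auto simp: integral_solution_def\<close>)
qed

lemma linear_integral_solution_delay:
  fixes A :: "'a::euclidean_space \<Rightarrow> 'a" and B :: "'b::euclidean_space \<Rightarrow> 'a"
  assumes A: "linear A" and B: "linear B" and \<eta>: "admissible_control \<eta>"
    and z: "integral_solution A 0 (\<lambda>t. B (\<eta> t)) T z" and h: "h \<in> {0..T}"
  shows "integral_solution A 0 (\<lambda>s. B (\<eta> (s - h))) T (\<lambda>s. z (max 0 (s - h)))"
proof -
  have cz: "continuous_on {0..T} z" using z by (simp add: integral_solution_def)
  have \<eta>0: "\<And>s. s \<le> 0 \<Longrightarrow> \<eta> s = 0" using \<eta> by (simp add: admissible_control_def)
  have z0: "z 0 = 0" using integral_solution_at_0[OF z] h \<eta>0[of 0] linear_0[OF B] by simp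
  define z' where "z' s = z (max 0 (s - h))" for s
  have cz': "continuous_on {0..T} z'" unfolding z'_def
    by (rule continuous_on_compose2[OF cz]) (use h in \<open>auto intro!: continuous_intros\<close>)
  have cA': "continuous_on {0..T} (\<lambda>s. A (z' s))"
    by (rule linear_continuous_on_compose[OF cz' A])
  have "z' s = 0 + integral {0..s} (\<lambda>r. A (z' r)) + B (\<eta> (s - h))" if s: "s \<in> {0..T}" for s
  proof (cases "s \<le> h")
    case True
    have "integral {0..s} (\<lambda>r. A (z' r)) = integral {0..s} (\<lambda>r. 0)"
      by (rule integral_cong) (use True in \<open>auto simp: z'_def z0 linear_0[OF A]\<close>)
    then show ?thesis using True \<eta>0[of "s - h"] linear_0[OF B] by (simp add: z'_def z0)
  next
    case False
    have "integral {0..s} (\<lambda>r. A (z' r)) = integral {0..h} (\<lambda>r. A (z' r)) + integral {h..s} (\<lambda>r. A (z' r))"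
      using Henstock_Kurzweil_Integration.integral_combine[OF _ _ integrable_on_initial_segment[OF cA' s]]
        False h by simp
    also have "integral {0..h} (\<lambda>r. A (z' r)) = integral {0..h} (\<lambda>r. 0)"
      by (rule integral_cong) (auto simp: z'_def z0 linear_0[OF A])
    also have "integral {h..s} (\<lambda>r. A (z' r)) = integral {0..s - h} ((\<lambda>r. A (z' r)) \<circ> (+) h)"
      using integral_shift_Icc_real[of 0 "s - h" "\<lambda>r. A (z' r)" h] by simp
    also have "\<dots> = integral {0..s - h} (\<lambda>r. A (z r))"
      by (rule integral_cong) (auto simp: z'_def)
    finally have "integral {0..s} (\<lambda>r. A (z' r)) = integral {0..s - h} (\<lambda>r. A (z r))" by simp
    moreover have "s - h \<in> {0..T}" using False s h by auto
    ultimately show ?thesis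
      using z False unfolding integral_solution_def z'_def by auto
  qed
  then show ?thesis using cz' unfolding integral_solution_def z'_def by auto
qed

lemma has_vector_derivative_vanishing_on_interval:
  fixes \<phi> :: "real \<Rightarrow> 'a::real_normed_vector"
  assumes T: "T > 0" and t: "t \<in> {0..T}" and d: "(\<phi> has_vector_derivative D) (at t within {0..T})"
    and z: "\<And>s. s \<in> {0..T} \<Longrightarrow> \<phi> s = 0"
  shows "D = 0"
proof -
  have "(\<phi> has_vector_derivative 0) (at t within {0..T})"
    by (rule has_vector_derivative_transform[OF t _ has_vector_derivative_const]) (use z in auto)
  then show ?thesis
    using vector_derivative_unique_within_closed_interval[of 0 T t \<phi> D 0] T t d by simp
qed

definition reachable_set :: "('a::euclidean_space \<Rightarrow> 'a) \<Rightarrow> ('b::euclidean_space \<Rightarrow> 'a) \<Rightarrow> real \<Rightarrow> 'a set"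
  where "reachable_set A B T =
    {z T | \<eta> z. admissible_control \<eta> \<and> integral_solution A 0 (\<lambda>t. B (\<eta> t)) T z}"

lemma subspace_reachable_set:
  fixes A :: "'a::euclidean_space \<Rightarrow> 'a" and B :: "'b::euclidean_space \<Rightarrow> 'a"
  assumes A: "linear A" and B: "linear B"
  shows "subspace (reachable_set A B T)"
  unfolding subspace_def
proof (intro conjI ballI allI)
  show "0 \<in> reachable_set A B T"
    using admissible_control_zero linear_integral_solution_zero[OF A B]
    unfolding reachable_set_def by fastforce
next
  fix u v assume "u \<in> reachable_set A B T" "v \<in> reachable_set A B T"
  then show "u + v \<in> reachable_set A B T"
    unfolding reachable_set_def
    using admissible_control_add linear_integral_solution_add[OF A B] by fastforce
next
  fix c :: real and u assume "u \<in> reachable_set A B T"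
  then show "c *\<^sub>R u \<in> reachable_set A B T"
    unfolding reachable_set_def
    using admissible_control_scaleR linear_integral_solution_scaleR[OF A B] by fastforce
qed

definition annihilates_trajectories ::
  "('a::euclidean_space \<Rightarrow> 'a) \<Rightarrow> ('b::euclidean_space \<Rightarrow> 'a) \<Rightarrow> real \<Rightarrow> ('a \<Rightarrow> real) \<Rightarrow> bool" where
  "annihilates_trajectories A B T M \<longleftrightarrow> (\<forall>\<eta> z t. admissible_control \<eta> \<longrightarrow>
     integral_solution A 0 (\<lambda>t. B (\<eta> t)) T z \<longrightarrow> t \<in> {0..T} \<longrightarrow> M (z t) = 0)"

text \<open>Every intermediate state z t is itself reachable: run the control T - t later.\<close>
lemma annihilates_trajectories_if_orthogonal_reachable:
  fixes A :: "'a::euclidean_space \<Rightarrow> 'a" and B :: "'b::euclidean_space \<Rightarrow> 'a"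
  assumes A: "linear A" and B: "linear B" and p: "\<And>v. v \<in> reachable_set A B T \<Longrightarrow> p \<bullet> v = 0"
  shows "annihilates_trajectories A B T (\<lambda>v. p \<bullet> v)"
  unfolding annihilates_trajectories_def
proof (intro allI impI)
  fix \<eta> z t assume \<eta>: "admissible_control \<eta>" and z: "integral_solution A 0 (\<lambda>t. B (\<eta> t)) T z"
    and t: "t \<in> {0..T}"
  have "T - t \<in> {0..T}" using t by auto
  from linear_integral_solution_delay[OF A B \<eta> z this] admissible_control_delay[OF \<eta>, of "T - t"]
  have "z (max 0 (T - (T - t))) \<in> reachable_set A B T"
    using t unfolding reachable_set_def by fastforce
  then show "p \<bullet> z t = 0" using p t by simp
qed

text \<open>Test with the control quadratic_ramp w, whose derivative vanishes at 0: differentiating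
  M (z t) = 0 once gives M (A (z t)) + t M (B w) = 0, and differentiating again at t = 0,
  where z 0 = 0, leaves M (B w) = 0.\<close>
lemma annihilates_trajectories_input:
  fixes A :: "'a::euclidean_space \<Rightarrow> 'a" and B :: "'b::euclidean_space \<Rightarrow> 'a"
  assumes A: "linear A" and B: "linear B" and M: "bounded_linear M" and T: "T > 0"
    and ann: "annihilates_trajectories A B T M"
  shows "M (B w) = 0"
proof -
  define \<eta> where "\<eta> s = quadratic_ramp s *\<^sub>R w" for s
  have \<eta>: "admissible_control \<eta>"
    using admissible_control_quadratic_ramp[of w] by (simp add: \<eta>_def[abs_def])
  have d\<eta>: "(\<eta> has_vector_derivative max t 0 *\<^sub>R w) (at t)" for t
    unfolding \<eta>_def
    using has_vector_derivative_scaleR[OF has_real_derivative_quadratic_ramp has_vector_derivative_const]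
    by simp
  obtain KA where KA: "KA-lipschitz_on UNIV A"
    using bounded_linear.lipschitz_boundE A by (auto simp: linear_conv_bounded_linear)
  obtain z where z: "integral_solution A 0 (\<lambda>t. B (\<eta> t)) T z"
    using integral_solution_exists[OF KA _ less_imp_le[OF T]] admissible_control_continuous_on[OF \<eta>]
      linear_continuous_on_compose[OF _ B] by blast
  have z0: "z 0 = 0"
    using integral_solution_at_0[OF z] T linear_0[OF B] by (simp add: \<eta>_def quadratic_ramp_def)
  have zd: "(z has_vector_derivative (A (z t) + B (max t 0 *\<^sub>R w))) (at t within {0..T})"
    if "t \<in> {0..T}" for t
    by (rule linear_integral_solution_has_vector_derivative[OF A B z d\<eta> that])
  have Mlin: "linear M" using M by (rule bounded_linear.linear)
  have MA: "bounded_linear (\<lambda>v. M (A v))"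
    using bounded_linear_compose[OF M] A by (simp add: linear_conv_bounded_linear)
  have first: "M (A (z t)) + t * M (B w) = 0" if t: "t \<in> {0..T}" for t
  proof -
    have "M (A (z t) + B (max t 0 *\<^sub>R w)) = 0"
      using ann \<eta> z t
      by (intro has_vector_derivative_vanishing_on_interval[OF T t
          bounded_linear.has_vector_derivative[OF M zd[OF t]]])
        (auto simp: annihilates_trajectories_def)
    then show ?thesis
      using t by (simp add: linear_add[OF Mlin] linear_scale[OF Mlin] linear_scale[OF B])
  qed
  have d0: "((\<lambda>t. M (A (z t)) + t * M (B w)) has_vector_derivative
      M (A (A (z 0) + B (max 0 0 *\<^sub>R w))) + M (B w)) (at 0 within {0..T})"
    using T by (intro has_vector_derivative_add bounded_linear.has_vector_derivative[OF MA zd])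
      (auto intro!: derivative_eq_intros simp flip: has_real_derivative_iff_has_vector_derivative)
  then have "M (A (A (z 0) + B (max 0 0 *\<^sub>R w))) + M (B w) = 0"
    using has_vector_derivative_vanishing_on_interval[OF T _ d0 first] T by simp
  then show ?thesis using z0 by (simp add: linear_0[OF A] linear_0[OF B] linear_0[OF Mlin])
qed

lemma annihilates_trajectories_compose:
  fixes A :: "'a::euclidean_space \<Rightarrow> 'a" and B :: "'b::euclidean_space \<Rightarrow> 'a"
  assumes A: "linear A" and B: "linear B" and M: "bounded_linear M" and T: "T > 0"
    and ann: "annihilates_trajectories A B T M"
  shows "annihilates_trajectories A B T (\<lambda>v. M (A v))"
  unfolding annihilates_trajectories_def
proof (intro allI impI)
  fix \<eta> z t assume \<eta>: "admissible_control \<eta>" and z: "integral_solution A 0 (\<lambda>t. B (\<eta> t)) T z"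
    and t: "t \<in> {0..T}"
  obtain D where D: "\<And>s. (\<eta> has_vector_derivative D s) (at s)"
    using \<eta> unfolding admissible_control_def by blast
  have "M (A (z t) + B (D t)) = 0"
    using ann \<eta> z t
    by (intro has_vector_derivative_vanishing_on_interval[OF T t bounded_linear.has_vector_derivative[OF M
          linear_integral_solution_has_vector_derivative[OF A B z D t]]])
      (auto simp: annihilates_trajectories_def)
  then show "M (A (z t)) = 0"
    using annihilates_trajectories_input[OF A B M T ann, of "D t"]
    by (simp add: linear_add[OF bounded_linear.linear[OF M]])
qed

lemma reachable_set_eq_UNIV:
  fixes A :: "'a::euclidean_space \<Rightarrow> 'a" and B :: "'b::euclidean_space \<Rightarrow> 'a"
  assumes A: "linear A" and B: "linear B" and T: "T > 0"
    and K: "\<And>p. (\<forall>j w. p \<bullet> (A ^^ j) (B w) = 0) \<Longrightarrow> p = 0"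
  shows "reachable_set A B T = UNIV"
proof (rule ccontr)
  assume "reachable_set A B T \<noteq> UNIV"
  then have "span (reachable_set A B T) \<noteq> UNIV"
    using subspace_reachable_set[OF A B, of T] by (metis span_eq_iff)
  then obtain p :: 'a where "p \<noteq> 0" and p: "span (reachable_set A B T) \<subseteq> {v. p \<bullet> v = 0}"
    using span_not_univ_subset_hyperplane by blast
  have "bounded_linear (\<lambda>v. p \<bullet> (A ^^ j) v) \<and> annihilates_trajectories A B T (\<lambda>v. p \<bullet> (A ^^ j) v)"
    for j
  proof (induction j)
    case 0
    show ?case
      using annihilates_trajectories_if_orthogonal_reachable[OF A B, of T p] p span_superset
      by (auto intro: bounded_linear_inner_right)
  next
    case (Suc j)
    have "(\<lambda>v. p \<bullet> (A ^^ Suc j) v) = (\<lambda>v. p \<bullet> (A ^^ j) (A v))"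
      by (simp only: funpow_Suc_right o_apply)
    then show ?case
      using Suc annihilates_trajectories_compose[OF A B _ T] bounded_linear_compose[of _ A] A
      by (auto simp: linear_conv_bounded_linear)
  qed
  then have "p \<bullet> (A ^^ j) (B w) = 0" for j w
    using annihilates_trajectories_input[OF A B _ T] by blast
  with K \<open>p \<noteq> 0\<close> show False by blast
qed

section \<open>Steering the nonlinear system\<close>

lemma linear_steering_family:
  fixes A :: "'a::euclidean_space \<Rightarrow> 'a" and B :: "'b::euclidean_space \<Rightarrow> 'a"
  assumes A: "linear A" and B: "linear B" and reach: "reachable_set A B T = UNIV" and T: "T \<ge> 0"
  obtains \<eta> :: "'a \<Rightarrow> real \<Rightarrow> 'b" and Z :: "'a \<Rightarrow> real \<Rightarrow> 'a" and M :: real where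
    "\<And>u. admissible_control (\<eta> u)"
    "\<And>u. integral_solution A 0 (\<lambda>t. B (\<eta> u t)) T (Z u)"
    "\<And>u. Z u T = u"
    "\<And>t. linear (\<lambda>u. \<eta> u t)"
    "M \<ge> 0" "\<And>u t. t \<in> {0..T} \<Longrightarrow> norm (B (\<eta> u t)) \<le> M * norm u"
proof -
  have "\<forall>v. \<exists>c. admissible_control (fst c) \<and> integral_solution A 0 (\<lambda>t. B (fst c t)) T (snd c)
      \<and> snd c T = v"
  proof
    fix v
    have "v \<in> reachable_set A B T" using reach by simp
    then obtain \<eta> z where "admissible_control \<eta>" "integral_solution A 0 (\<lambda>t. B (\<eta> t)) T z" "z T = v"
      unfolding reachable_set_def by blast
    then show "\<exists>c. admissible_control (fst c) \<and> integral_solution A 0 (\<lambda>t. B (fst c t)) T (snd c)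
        \<and> snd c T = v"
      by (intro exI[of _ "(\<eta>, z)"]) simp
  qed
  then obtain c where c: "\<And>v. admissible_control (fst (c v))"
    "\<And>v. integral_solution A 0 (\<lambda>t. B (fst (c v) t)) T (snd (c v))" "\<And>v. snd (c v) T = v"
    by metis
  define \<eta> where "\<eta> u t = (\<Sum>b\<in>Basis. (u \<bullet> b) *\<^sub>R fst (c b) t)" for u t
  define Z where "Z u t = (\<Sum>b\<in>Basis. (u \<bullet> b) *\<^sub>R snd (c b) t)" for u t
  define S where "S t = (\<Sum>b\<in>Basis. norm (B (fst (c b) t)))" for t
  have "continuous_on {0..T} S"
    unfolding S_def
    by (intro continuous_intros linear_continuous_on_compose[OF _ B] admissible_control_continuous_on c)
  then have "bounded (S ` {0..T})"
    by (rule compact_imp_bounded[OF compact_continuous_image[OF _ compact_Icc]])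
  then obtain M where "\<And>t. t \<in> {0..T} \<Longrightarrow> norm (S t) \<le> M"
    unfolding bounded_iff by blast
  then have M: "\<And>t. t \<in> {0..T} \<Longrightarrow> S t \<le> M"
    by (smt (verit) real_norm_def)
  show thesis
  proof
    show "admissible_control (\<eta> u)" for u
      unfolding \<eta>_def by (intro admissible_control_sum c(1)) simp
    show "integral_solution A 0 (\<lambda>t. B (\<eta> u t)) T (Z u)" for u
      unfolding \<eta>_def Z_def by (intro linear_integral_solution_sum[OF A B] c(2)) simp
    show "Z u T = u" for u
      by (simp add: Z_def c(3) euclidean_representation)
    show "linear (\<lambda>u. \<eta> u t)" for t
      by (rule linearI)
        (simp_all add: \<eta>_def inner_add_left scaleR_add_left sum.distrib scaleR_sum_right)
    show "M \<ge> 0"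
      using M[of 0] T by (smt (verit) S_def atLeastAtMost_iff norm_ge_zero sum_nonneg)
    fix u t assume t: "t \<in> {0..T}"
    have "norm (B (\<eta> u t)) = norm (\<Sum>b\<in>Basis. (u \<bullet> b) *\<^sub>R B (fst (c b) t))"
      by (simp add: \<eta>_def linear_sum[OF B] linear_scale[OF B])
    also have "\<dots> \<le> (\<Sum>b\<in>Basis. norm u * norm (B (fst (c b) t)))"
      by (intro sum_norm_le) (simp add: Basis_le_norm mult_right_mono)
    also have "\<dots> \<le> M * norm u"
      using M[OF t] mult_left_mono[of "S t" M "norm u"]
      by (simp add: S_def mult.commute flip: sum_distrib_left)
    finally show "norm (B (\<eta> u t)) \<le> M * norm u" .
  qed
qed

lemma integral_solution_superposition:
  fixes A F :: "'a::euclidean_space \<Rightarrow> 'a"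
  assumes A: "linear A" and F: "continuous_on UNIV F"
    and y: "integral_solution (\<lambda>v. A v + F v) x h T y"
    and Y: "integral_solution A x (\<lambda>t. 0) T Y" and Z: "integral_solution A 0 h T Z"
  shows "integral_solution A 0 (\<lambda>t. integral {0..t} (\<lambda>s. F (y s))) T (\<lambda>t. y t - Y t - Z t)"
  unfolding integral_solution_def
proof (intro conjI ballI)
  have cy: "continuous_on {0..T} y" and cY: "continuous_on {0..T} Y" and cZ: "continuous_on {0..T} Z"
    using y Y Z by (auto simp: integral_solution_def)
  then show "continuous_on {0..T} (\<lambda>t. y t - Y t - Z t)" by (intro continuous_intros)
  fix t assume t: "t \<in> {0..T}"
  have cF: "continuous_on {0..T} (\<lambda>s. F (y s))"
    by (rule continuous_on_compose2[OF F cy subset_UNIV])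
  have cAy: "continuous_on {0..T} (\<lambda>s. A (y s))" and cAY: "continuous_on {0..T} (\<lambda>s. A (Y s))"
    and cAZ: "continuous_on {0..T} (\<lambda>s. A (Z s))"
    using cy cY cZ by (auto intro: linear_continuous_on_compose[OF _ A])
  note int = integrable_on_initial_segment[OF _ t]
  have "integral {0..t} (\<lambda>s. A (y s - Y s - Z s)) =
      integral {0..t} (\<lambda>s. A (y s)) - integral {0..t} (\<lambda>s. A (Y s)) - integral {0..t} (\<lambda>s. A (Z s))"
    using int[OF cAy] int[OF cAY] int[OF cAZ]
    by (simp add: linear_diff[OF A] integral_diff integrable_diff)
  moreover have "integral {0..t} (\<lambda>s. A (y s) + F (y s)) =
      integral {0..t} (\<lambda>s. A (y s)) + integral {0..t} (\<lambda>s. F (y s))"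
    by (rule integral_add[OF int[OF cAy] int[OF cF]])
  ultimately show "y t - Y t - Z t =
      0 + integral {0..t} (\<lambda>s. A (y s - Y s - Z s)) + integral {0..t} (\<lambda>s. F (y s))"
    using y Y Z t unfolding integral_solution_def by (simp add: algebra_simps)
qed

lemma sqrt_affine_le_mult:
  fixes \<alpha> \<beta> r :: real
  assumes "\<alpha> \<ge> 0" "\<beta> \<ge> 0" "r \<ge> 0"
  shows "sqrt (1 + \<alpha> + \<beta> * r) \<le> sqrt (1 + \<alpha> + \<beta>) * sqrt (1 + r)"
proof -
  have "1 + \<alpha> + \<beta> * r \<le> (1 + \<alpha> + \<beta>) * (1 + r)"
    using assms by (simp add: algebra_simps)
  then show ?thesis by (simp flip: real_sqrt_mult)
qed

text \<open>The growth bound enters only here: along any solution |y| grows at most linearly in the size H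
  of the forcing, so the nonlinear part of the endpoint grows only like sqrt H.\<close>
lemma forced_endpoint_sqrt_bound:
  fixes A F :: "'a::euclidean_space \<Rightarrow> 'a"
  assumes A: "linear A" and F: "Lf-lipschitz_on UNIV F"
    and growth: "\<And>z. norm (F z) \<le> C * sqrt (1 + norm z)" and T: "T \<ge> 0"
  obtains K where "K \<ge> 0"
    "\<And>h y Z H. integral_solution (\<lambda>v. A v + F v) x h T y \<Longrightarrow> integral_solution A 0 h T Z \<Longrightarrow>
       (\<And>t. t \<in> {0..T} \<Longrightarrow> norm (h t) \<le> H) \<Longrightarrow> norm (y T - Z T) \<le> K * sqrt (1 + H)"
proof -
  obtain KA where KA: "KA-lipschitz_on UNIV A"
    using bounded_linear.lipschitz_boundE A by (auto simp: linear_conv_bounded_linear)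
  have G: "(KA + Lf)-lipschitz_on UNIV (\<lambda>v. A v + F v)" by (rule lipschitz_on_add[OF KA F])
  obtain Y where Y: "integral_solution A x (\<lambda>t. 0) T Y"
    using integral_solution_exists[OF KA continuous_on_const T] by blast
  define E1 where "E1 = exp (2 * (KA + Lf + 1) * T)"
  define E2 where "E2 = exp (2 * (KA + 1) * T)"
  define \<alpha> where "\<alpha> = (norm x + T * norm (A 0 + F 0)) * E1"
  define K where "K = norm (Y T) + T * C * E2 * sqrt (1 + \<alpha> + E1)"
  have C: "C \<ge> 0" using order_trans[OF norm_ge_zero growth[of 0]] by simp
  have \<alpha>: "\<alpha> \<ge> 0" and E1: "E1 > 0" and E2: "E2 > 0" using T by (auto simp: \<alpha>_def E1_def E2_def)
  show thesis
  proof
    show "K \<ge> 0" using T C E2 \<alpha> E1 by (simp add: K_def)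
    fix h y Z H
    assume y: "integral_solution (\<lambda>v. A v + F v) x h T y" and Z: "integral_solution A 0 h T Z"
      and H: "\<And>t. t \<in> {0..T} \<Longrightarrow> norm (h t) \<le> H"
    have H0: "H \<ge> 0" using H[of 0] T by (smt (verit) atLeastAtMost_iff norm_ge_zero)
    define Fmax where "Fmax = C * sqrt (1 + \<alpha> + E1 * H)"
    have Fy: "norm (F (y s)) \<le> Fmax" if s: "s \<in> {0..T}" for s
    proof -
      have "norm (y s) \<le> (norm x + H + T * norm (A 0 + F 0)) * E1"
        unfolding E1_def using integral_solution_norm_bound[OF G y _ s] H by (simp add: add_ac)
      then have "norm (y s) \<le> \<alpha> + E1 * H" by (simp add: \<alpha>_def algebra_simps)
      then show ?thesis
        using growth[of "y s"] C by (smt (verit) Fmax_def mult_left_mono real_sqrt_le_mono)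
    qed
    have Fmax: "Fmax \<ge> 0" using Fy[of 0] T by (smt (verit) atLeastAtMost_iff norm_ge_zero)
    have cF: "continuous_on {0..T} (\<lambda>s. F (y s))"
      using y by (auto intro: continuous_on_compose2[OF lipschitz_on_continuous_on[OF F]]
          simp: integral_solution_def)
    have "norm (y T - Y T - Z T) \<le> (T * Fmax) * E2"
      unfolding E2_def
    proof (rule integral_solution_norm_bound[OF KA integral_solution_superposition[OF A
            lipschitz_on_continuous_on[OF F] y Y Z]])
      fix t assume t: "t \<in> {0..T}"
      have "norm (integral {0..t} (\<lambda>s. F (y s))) \<le> integral {0..t} (\<lambda>s. Fmax)"
        by (rule norm_integral_initial_segment_le[OF cF _ t]) (use Fy in auto)
      also have "\<dots> \<le> T * Fmax" using t Fmax by (simp add: mult_right_mono)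
      finally show "norm (0::'a) + norm (integral {0..t} (\<lambda>s. F (y s))) + T * norm (A 0) \<le> T * Fmax"
        by (simp add: linear_0[OF A])
    qed (use T in auto)
    moreover have "T * Fmax * E2 \<le> T * C * E2 * sqrt (1 + \<alpha> + E1) * sqrt (1 + H)"
      using sqrt_affine_le_mult[OF \<alpha> less_imp_le[OF E1] H0] T C E2
      by (simp add: Fmax_def mult_left_mono mult.assoc)
    moreover have "norm (Y T) \<le> norm (Y T) * sqrt (1 + H)" using H0 by (simp add: mult_le_cancel_left1)
    ultimately show "norm (y T - Z T) \<le> K * sqrt (1 + H)"
      using norm_triangle_ineq[of "Y T" "y T - Y T - Z T"] by (simp add: K_def algebra_simps)
  qed
qed

lemma surj_if_sqrt_perturbation_of_id:
  fixes \<Psi> :: "'a::euclidean_space \<Rightarrow> 'a"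
  assumes cont: "continuous_on UNIV \<Psi>" and bound: "\<And>u. norm (\<Psi> u - u) \<le> K * sqrt (1 + norm u)"
  shows "surj \<Psi>"
proof -
  have K: "K \<ge> 0" using order_trans[OF norm_ge_zero bound[of 0]] by simp
  have "y \<in> range \<Psi>" for y
  proof -
    define R where "R = max 1 (2 * norm y + 8 * K\<^sup>2)"
    have R: "R \<ge> 1" and yR: "2 * norm y \<le> R"
      unfolding R_def using zero_le_power2[of K] by (auto simp: le_max_iff_disj)
    have "K * sqrt (1 + R) \<le> K * sqrt (2 * R)"
      using K R by (intro mult_left_mono) auto
    also have "\<dots> = sqrt (K\<^sup>2 * (2 * R))"
      using K by (simp add: real_sqrt_mult)
    also have "\<dots> \<le> sqrt ((R / 2)\<^sup>2)"
    proof (rule real_sqrt_le_mono)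
      have "8 * K\<^sup>2 \<le> R" unfolding R_def using norm_ge_zero[of y] by (simp add: le_max_iff_disj)
      then have "8 * K\<^sup>2 * R \<le> R * R" using R by (intro mult_right_mono) auto
      then show "K\<^sup>2 * (2 * R) \<le> (R / 2)\<^sup>2" by (simp add: power2_eq_square)
    qed
    finally have KR: "K * sqrt (1 + R) \<le> R / 2" using R by simp
    define \<Phi> where "\<Phi> u = y - (\<Psi> u - u)" for u
    have "\<Phi> u \<in> cball 0 R" if "u \<in> cball 0 R" for u
    proof -
      have "norm (\<Psi> u - u) \<le> K * sqrt (1 + R)"
        using bound[of u] that K by (smt (verit) mem_cball_0 mult_left_mono real_sqrt_le_mono)
      then show ?thesis
        using KR yR norm_triangle_ineq4[of y "\<Psi> u - u"] unfolding \<Phi>_def mem_cball_0 by linarith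
    qed
    moreover have "continuous_on (cball 0 R) \<Phi>"
      unfolding \<Phi>_def by (intro continuous_intros continuous_on_subset[OF cont]) auto
    ultimately obtain u where "\<Phi> u = u"
      using brouwer[OF compact_cball convex_cball, of 0 R \<Phi>] R by fastforce
    then show ?thesis by (simp add: \<Phi>_def)
  qed
  then show ?thesis by blast
qed

lemma exact_steering:
  fixes A F :: "'a::euclidean_space \<Rightarrow> 'a" and B :: "'b::euclidean_space \<Rightarrow> 'a"
  assumes A: "linear A" and B: "linear B" and F: "Lf-lipschitz_on UNIV F"
    and growth: "\<And>z. norm (F z) \<le> C * sqrt (1 + norm z)" and T: "T \<ge> 0"
    and reach: "reachable_set A B T = UNIV"
  shows "\<exists>\<eta>. admissible_control \<eta> \<and> (\<exists>y. integral_solution (\<lambda>v. A v + F v) x (\<lambda>t. B (\<eta> t)) T y) \<and>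
    (\<forall>y. integral_solution (\<lambda>v. A v + F v) x (\<lambda>t. B (\<eta> t)) T y \<longrightarrow> y T = x0)"
proof -
  obtain \<eta> Z M where \<eta>: "\<And>u. admissible_control (\<eta> u)"
    and Z: "\<And>u. integral_solution A 0 (\<lambda>t. B (\<eta> u t)) T (Z u)" and ZT: "\<And>u. Z u T = u"
    and lin: "\<And>t. linear (\<lambda>u. \<eta> u t)" and "M \<ge> 0"
    and M: "\<And>u t. t \<in> {0..T} \<Longrightarrow> norm (B (\<eta> u t)) \<le> M * norm u"
    using linear_steering_family[OF A B reach T] by blast
  obtain K where "K \<ge> 0" and K: "\<And>h y Z H. integral_solution (\<lambda>v. A v + F v) x h T y \<Longrightarrow>
      integral_solution A 0 h T Z \<Longrightarrow> (\<And>t. t \<in> {0..T} \<Longrightarrow> norm (h t) \<le> H) \<Longrightarrow>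
      norm (y T - Z T) \<le> K * sqrt (1 + H)"
    using forced_endpoint_sqrt_bound[OF A F growth T] by blast
  obtain KA where KA: "KA-lipschitz_on UNIV A"
    using bounded_linear.lipschitz_boundE A by (auto simp: linear_conv_bounded_linear)
  have G: "(KA + Lf)-lipschitz_on UNIV (\<lambda>v. A v + F v)" by (rule lipschitz_on_add[OF KA F])
  define sol where "sol u = (SOME y. integral_solution (\<lambda>v. A v + F v) x (\<lambda>t. B (\<eta> u t)) T y)" for u
  have sol: "integral_solution (\<lambda>v. A v + F v) x (\<lambda>t. B (\<eta> u t)) T (sol u)" for u
    unfolding sol_def using admissible_control_continuous_on[OF \<eta>]
    by (intro someI_ex[OF integral_solution_exists[OF G _ T]] linear_continuous_on_compose[OF _ B])
  have "(M * exp (2 * (KA + Lf + 1) * T))-lipschitz_on UNIV (\<lambda>u. sol u T)"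
  proof (rule lipschitz_onI)
    fix u v
    have "B (\<eta> u t) - B (\<eta> v t) = B (\<eta> (u - v) t)" for t
      by (simp add: linear_diff[OF B, symmetric] linear_diff[OF lin])
    then have "norm (sol u T - sol v T) \<le> M * norm (u - v) * exp (2 * (KA + Lf + 1) * T)"
      using M T \<open>M \<ge> 0\<close> by (intro integral_solution_diff_bound[OF G sol sol]) auto
    then show "dist (sol u T) (sol v T) \<le> M * exp (2 * (KA + Lf + 1) * T) * dist u v"
      by (simp add: dist_norm mult_ac)
  qed (use \<open>M \<ge> 0\<close> in simp)
  moreover have "norm (sol u T - u) \<le> (K * sqrt (1 + M)) * sqrt (1 + norm u)" for u
  proof -
    have "norm (sol u T - u) \<le> K * sqrt (1 + M * norm u)"
      using K[OF sol Z M] by (simp add: ZT)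
    also have "\<dots> \<le> K * (sqrt (1 + M) * sqrt (1 + norm u))"
      using sqrt_affine_le_mult[of 0 M "norm u"] \<open>M \<ge> 0\<close> \<open>K \<ge> 0\<close> by (simp add: mult_left_mono)
    finally show ?thesis by (simp add: mult.assoc)
  qed
  ultimately have "surj (\<lambda>u. sol u T)"
    by (intro surj_if_sqrt_perturbation_of_id lipschitz_on_continuous_on)
  then obtain u where u: "sol u T = x0" by (metis surjD)
  have "y T = x0" if "integral_solution (\<lambda>v. A v + F v) x (\<lambda>t. B (\<eta> u t)) T y" for y
    using integral_solution_unique[OF G that sol[of u], of T] T u by simp
  then show ?thesis using \<eta> sol by blast
qed

lemma kalman_condition_orthogonal_eq_0:
  assumes "kalman_condition A B" and "\<forall>j w. p \<bullet> (A ^^ j) (B w) = 0"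
  shows "p = 0"
proof -
  have "span {(A ^^ j) (B (axis i 1)) | j i. True} \<subseteq> {v. p \<bullet> v = 0}"
    using assms(2) by (intro span_minimal subspace_hyperplane) auto
  then have "p \<bullet> p = 0" using assms(1) unfolding kalman_condition_def by blast
  then show ?thesis by simp
qed

lemma growth_condition_sqrt_bound:
  assumes "growth_condition A B F"
  obtains C where "\<And>z. norm (F z) \<le> C * sqrt (1 + norm z)"
proof -
  obtain a C where a: "0 \<le> a" "a < 1 / (2 * real (dstar A B))"
    and C: "\<And>z. norm (F z) / (1 + norm z) powr a \<le> C"
    using assms unfolding growth_condition_def by blast
  have "a \<le> 1/2"
  proof (cases "dstar A B = 0")
    case False
    then have "a * 2 \<le> a * (2 * real (dstar A B))" using a(1) by (intro mult_left_mono) auto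
    with a(2) False show ?thesis by (simp add: field_simps)
  qed (use a in auto)
  have "norm (F z) \<le> C * sqrt (1 + norm z)" for z
  proof -
    have "norm (F z) \<le> C * (1 + norm z) powr a"
      using C[of z] by (simp add: divide_le_eq add_nonneg_eq_0_iff)
    also have "\<dots> \<le> C * (1 + norm z) powr (1/2)"
      using \<open>a \<le> 1/2\<close> order_trans[OF divide_nonneg_nonneg[OF norm_ge_zero powr_ge_zero] C[of 0]]
      by (intro mult_left_mono powr_mono) auto
    finally show ?thesis by (simp add: powr_half_sqrt add_pos_nonneg)
  qed
  then show thesis by (rule that)
qed

lemma is_solution_iff_integral_solution:
  "is_solution A B F T x \<eta> y \<longleftrightarrow> integral_solution (\<lambda>v. A v + F v) x (\<lambda>t. B (\<eta> t)) T y"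
  unfolding is_solution_def integral_solution_def by simp

theorem mainTheorem4:
  fixes A :: "real^'d \<Rightarrow> real^'d" and B :: "real^'n \<Rightarrow> real^'d"
    and F :: "real^'d \<Rightarrow> real^'d" and x0 :: "real^'d"
  assumes "CARD('n) \<le> CARD('d)"
    and "linear A" and "linear B"
    and "smooth_map F" and "globally_lipschitz F"
    and "kalman_condition A B"
    and "growth_condition A B F"
  shows "\<forall>x (\<delta>::real) (T::real). \<delta> > 0 \<longrightarrow> T > 0 \<longrightarrow>
           (\<exists>\<eta> :: real \<Rightarrow> real^'n. C1_0 T \<eta> \<and>
              (\<exists>y. is_solution A B F T x \<eta> y) \<and>
              (\<forall>y. is_solution A B F T x \<eta> y \<longrightarrow> y T \<in> ball x0 (\<delta> / 2)))"
proof (intro allI impI)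
  fix x :: "real^'d" and \<delta> T :: real
  assume "\<delta> > 0" "T > 0"
  obtain Lf where F: "Lf-lipschitz_on UNIV F"
    using \<open>globally_lipschitz F\<close> unfolding globally_lipschitz_def by blast
  obtain C where growth: "\<And>z. norm (F z) \<le> C * sqrt (1 + norm z)"
    using growth_condition_sqrt_bound[OF \<open>growth_condition A B F\<close>] by blast
  have "reachable_set A B T = UNIV"
    using kalman_condition_orthogonal_eq_0[OF \<open>kalman_condition A B\<close>]
    by (intro reachable_set_eq_UNIV[OF \<open>linear A\<close> \<open>linear B\<close> \<open>T > 0\<close>]) blast
  then obtain \<eta> where "admissible_control \<eta>"
    and "\<exists>y. is_solution A B F T x \<eta> y" and "\<forall>y. is_solution A B F T x \<eta> y \<longrightarrow> y T = x0"
    using exact_steering[OF \<open>linear A\<close> \<open>linear B\<close> F growth less_imp_le[OF \<open>T > 0\<close>]]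
    unfolding is_solution_iff_integral_solution by blast
  then show "\<exists>\<eta>. C1_0 T \<eta> \<and> (\<exists>y. is_solution A B F T x \<eta> y) \<and>
      (\<forall>y. is_solution A B F T x \<eta> y \<longrightarrow> y T \<in> ball x0 (\<delta> / 2))"
    using \<open>\<delta> > 0\<close> by (intro exI[of _ \<eta>]) (auto intro: admissible_control_C1_0)
qed

end
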